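(* For an arbitrary channel $W:\mathcal{X}\to\mathcal{Y}$ with $\mathcal{Y}$ finite, any block length $n$, any $0<\delta\le\sqrt{n}\log|\mathcal{Y}|$ and any $x^n\in\mathcal{X}^n$, \[ W_{x^n}(\mathcal{T}^\delta_{x^n})\ge1-2\exp\!\left(-\delta^2/36K(|\mathcal{Y}|)\right). \]
   Context: A channel $W:\mathcal{X}\to\mathcal{Y}$ ($\mathcal{X}$ measurable space) is a measurable map $x\mapsto W_x\in\mathcal{P}(\mathcal{Y})$; $W_{x^n}(y^n)=\prod_{i=1}^nW_{x_i}(y_i)$. Logarithms and exponentials are base 2; $H$ is Shannon entropy. The conditional typical set is $\mathcal{T}^\delta_{x^n}=\{y^n\in\mathcal{Y}^n:|\log W_{x^n}(y^n)+H(W_{x^n})|\le\delta\sqrt{n}\}$, and $K(d)=(\log\max\{d,3\})^2$. *)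

theory Defs
  imports "HOL-Probability.Probability"
begin

definition prod_chan :: "('x \<Rightarrow> 'y pmf) \<Rightarrow> 'x list \<Rightarrow> 'y list \<Rightarrow> real" where
  "prod_chan W xs ys = (\<Prod>i<length xs. pmf (W (xs ! i)) (ys ! i))"

definition shannon_H :: "'a set \<Rightarrow> ('a \<Rightarrow> real) \<Rightarrow> real" where
  "shannon_H S p = - (\<Sum>y\<in>S. if p y = 0 then 0 else p y * log 2 (p y))"

definition blocks :: "nat \<Rightarrow> 'y list set" where
  "blocks n = {ys. length ys = n}"

definition H_chan :: "('x \<Rightarrow> 'y pmf) \<Rightarrow> 'x list \<Rightarrow> real" where
  "H_chan W xs = shannon_H (blocks (length xs)) (prod_chan W xs)"

text \<open>Conditional typical set; sequences of probability 0 (log = -infinity) are excluded.\<close>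
definition typical_set :: "('x \<Rightarrow> 'y pmf) \<Rightarrow> 'x list \<Rightarrow> real \<Rightarrow> 'y list set" where
  "typical_set W xs \<delta> = {ys \<in> blocks (length xs). prod_chan W xs ys > 0 \<and>
      \<bar>log 2 (prod_chan W xs ys) + H_chan W xs\<bar> \<le> \<delta> * sqrt (real (length xs))}"

definition Kfun :: "nat \<Rightarrow> real" where
  "Kfun d = (log 2 (real (max d 3)))^2"

end

theory Submission
  imports Defs
begin

text \<open>
  The information density log W_{x^n}(y^n) + H(W_{x^n}) is a sum of n independent centred
  self-informations, so its moment generating function factorises over the letters. For one
  letter with distribution p and |s| sqrt K(|Y|) \<le> 1/18, the second-order Taylor bound for exp
  gives E 2^{s (log p + H(p))} \<le> 2^{9 s^2 K(|Y|)}: letters whose self-information is at most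
  three times ln max(|Y|,3) are controlled through H(p) \<le> log |Y|, and each rarer letter
  contributes at most 4 / max(|Y|,3) because l^2 e^{-l} decays. Markov's inequality on both
  tails with s = \<delta> / (18 K sqrt n) then gives the bound; the hypothesis \<delta> \<le> sqrt n log |Y| is
  exactly what makes this s admissible.
\<close>

lemma exp_le_quadratic_remainder:
  fixes v B :: real
  assumes "0 \<le> B" "v \<le> B"
  shows "exp v \<le> 1 + v + v^2 / 2 * exp B"
proof (cases "v < 0")
  case True
  obtain t where t: "exp v = (\<Sum>m<3. v ^ m / fact m) + exp t / fact 3 * v ^ 3"
    using Maclaurin_exp_le[of v 3] by blast
  have "v ^ 3 < 0" using True by (simp add: power_less_zero_eq)
  then have "exp t / fact 3 * v ^ 3 \<le> 0" by (simp add: mult_nonneg_nonpos divide_nonpos_pos)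
  then have "exp v \<le> 1 + v + v^2 / 2" using t by (simp add: numeral_3_eq_3 power2_eq_square)
  moreover have "v^2 / 2 \<le> v^2 / 2 * exp B"
    using assms(1) mult_left_mono[of 1 "exp B" "v^2 / 2"] by simp
  ultimately show ?thesis by simp
next
  case False
  obtain t where t: "\<bar>t\<bar> \<le> \<bar>v\<bar>" "exp v = (\<Sum>m<2. v ^ m / fact m) + exp t / fact 2 * v ^ 2"
    using Maclaurin_exp_le[of v 2] by blast
  have "exp t \<le> exp B" using t(1) False assms(2) by simp
  then have "exp t * v^2 \<le> exp B * v^2" by (intro mult_right_mono) auto
  then have "exp t / fact 2 * v ^ 2 \<le> v^2 / 2 * exp B" by (simp add: mult.commute)
  then show ?thesis using t(2) by (simp add: numeral_2_eq_2)
qed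

lemma power2_mult_exp_neg_le:
  fixes c l :: real
  assumes "0 < c" "0 \<le> l"
  shows "l^2 * exp (- c * l) \<le> 16 / (25 * c^2)"
proof -
  define x where "x = c * l / 2"
  have "x \<le> exp (x - 1)" using exp_ge_add_one_self[of "x - 1"] by simp
  moreover have "5/2 \<le> exp (1::real)" using exp_lower_Taylor_quadratic[of 1] by simp
  moreover have "0 \<le> x" using assms unfolding x_def by simp
  ultimately have "5/2 * x \<le> exp 1 * exp (x - 1)" by (intro mult_mono) auto
  then have "(5/2 * x)^2 \<le> (exp x)^2" by (simp add: power_mono \<open>0 \<le> x\<close> flip: exp_add)
  also have "(exp x)^2 = exp (c * l)" by (simp add: x_def power2_eq_square flip: exp_add)
  finally have "25 * c^2 * l^2 \<le> 16 * exp (c * l)"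
    by (simp add: x_def power_mult_distrib power_divide)
  then show ?thesis using assms by (simp add: exp_minus field_simps)
qed

lemma exp_neg_mult_square_tail_le:
  fixes a L l :: real
  assumes "0 \<le> a" "a * L \<le> 1/18" "1 \<le> L" "3 * L < l"
  shows "exp (- l) * (l^2 + L^2) * exp (a * (l + L)) \<le> 4 * exp (- L)"
proof -
  have "a \<le> 1/18" using assms(1-3) mult_left_mono[of 1 L a] by linarith
  then have "a * l \<le> l / 18" using assms mult_right_mono[of a "1/18" l] by simp
  then have "- l + a * (l + L) \<le> 1/18 + - L + - (11/18) * l"
    using assms(2,4) by (simp add: distrib_left)
  then have e: "exp (- l) * exp (a * (l + L)) \<le> exp (1/18) * exp (- L) * exp (- (11/18) * l)"
    by (simp flip: exp_add)
  have "L^2 \<le> l^2" using assms(3,4) by (intro power_mono) auto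
  then have "l^2 + L^2 \<le> 2 * l^2" by simp
  then have "(l^2 + L^2) * (exp (- l) * exp (a * (l + L)))
      \<le> 2 * l^2 * (exp (1/18) * exp (- L) * exp (- (11/18) * l))"
    by (rule mult_mono[OF _ e]) auto
  then have "exp (- l) * (l^2 + L^2) * exp (a * (l + L))
      \<le> 2 * l^2 * (exp (1/18) * exp (- L) * exp (- (11/18) * l))"
    by (simp add: mult_ac)
  also have "\<dots> = 2 * exp (1/18) * exp (- L) * (l^2 * exp (- (11/18) * l))" by simp
  also have "\<dots> \<le> 2 * (343/324) * exp (- L) * (16 / (25 * (11/18)^2))"
    using exp_bound[of "1/18::real"] power2_mult_exp_neg_le[of "11/18" l] assms(3,4)
    by (intro mult_mono) (auto simp: power2_eq_square)
  also have "\<dots> \<le> 4 * exp (- L)" by (simp add: power2_eq_square)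
  finally show ?thesis .
qed

lemma exp_neg_mult_square_le:
  fixes a L l :: real
  assumes "0 \<le> a" "a * L \<le> 1/18" "1 \<le> L" "0 \<le> l"
  shows "exp (- l) * (l^2 + L^2) * exp (a * (l + L)) \<le> 90/7 * L^2 * exp (- l) + 4 * exp (- L)"
proof (cases "l \<le> 3 * L")
  case True
  have "a * (l + L) \<le> 4 * (a * L)" using True assms(1) mult_left_mono[OF True assms(1)]
    by (simp add: distrib_left mult_ac)
  also have "\<dots> \<le> 2/9" using assms(2) by linarith
  finally have "exp (a * (l + L)) \<le> exp (2/9)" by simp
  also have "exp (2/9::real) \<le> 9/7" using exp_bound[of "2/9::real"] by (simp add: power2_eq_square)
  finally have e: "exp (a * (l + L)) \<le> 9/7" .
  have "l^2 \<le> (3 * L)^2" using True assms(4) by (intro power_mono) auto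
  then have "l^2 + L^2 \<le> 10 * L^2" by (simp add: power_mult_distrib)
  then have "exp (- l) * (l^2 + L^2) * exp (a * (l + L)) \<le> exp (- l) * (10 * L^2) * (9/7)"
    using e by (intro mult_mono) auto
  also have "\<dots> \<le> 90/7 * L^2 * exp (- l) + 4 * exp (- L)" using exp_gt_zero[of "- L"] by simp
  finally show ?thesis .
next
  case False
  then have "exp (- l) * (l^2 + L^2) * exp (a * (l + L)) \<le> 4 * exp (- L)"
    using exp_neg_mult_square_tail_le assms by simp
  then show ?thesis by (simp add: add_increasing)
qed

lemma mult_exp_centered_ln_le:
  fixes q h s \<Lambda> :: real
  assumes "0 \<le> q" "q \<le> 1" "0 \<le> h" "h \<le> \<Lambda>" "1 \<le> \<Lambda>" "\<bar>s\<bar> * \<Lambda> \<le> 1/18"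
  shows "q * exp (s * (ln q + h))
    \<le> q + q * (s * (ln q + h)) + s^2 / 2 * (90/7 * \<Lambda>^2 * q + 4 * exp (- \<Lambda>))"
proof (cases "q = 0")
  case False
  define l where "l = - ln q"
  have q: "q = exp (- l)" and "0 \<le> l" using assms(1,2) False by (simp_all add: l_def)
  define v where "v = s * (ln q + h)"
  have "v \<le> \<bar>v\<bar>" by simp
  also have "\<bar>v\<bar> = \<bar>s\<bar> * \<bar>h - l\<bar>" by (simp add: v_def l_def abs_mult add.commute)
  also have "\<bar>h - l\<bar> \<le> l + \<Lambda>" using assms(3,4) \<open>0 \<le> l\<close> by linarith
  finally have vB: "v \<le> \<bar>s\<bar> * (l + \<Lambda>)" by (simp add: mult_left_mono)
  have "h^2 \<le> \<Lambda>^2" using assms(3,4) by (intro power_mono) auto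
  moreover have "0 \<le> h * l" using assms(3) \<open>0 \<le> l\<close> by simp
  ultimately have "(h - l)^2 \<le> l^2 + \<Lambda>^2" by (simp add: power2_diff mult.assoc)
  moreover have "v^2 = s^2 * (h - l)^2" by (simp add: v_def l_def power_mult_distrib add.commute)
  ultimately have v2: "v^2 \<le> s^2 * (l^2 + \<Lambda>^2)" by (simp add: mult_left_mono)
  define B where "B = \<bar>s\<bar> * (l + \<Lambda>)"
  have "q * exp v \<le> q * (1 + v + v^2 / 2 * exp B)"
    using exp_le_quadratic_remainder[OF _ vB] assms(1,5) \<open>0 \<le> l\<close> by (simp add: B_def mult_left_mono)
  also have "\<dots> = q + q * v + q * v^2 * exp B / 2" by (simp add: algebra_simps)
  also have "q * v^2 * exp B \<le> q * (s^2 * (l^2 + \<Lambda>^2)) * exp B"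
    using v2 assms(1) by (intro mult_right_mono mult_left_mono) auto
  also have "\<dots> = s^2 * (q * (l^2 + \<Lambda>^2) * exp B)" by simp
  also have "q * (l^2 + \<Lambda>^2) * exp B \<le> 90/7 * \<Lambda>^2 * q + 4 * exp (- \<Lambda>)"
    unfolding q B_def using exp_neg_mult_square_le assms(5,6) \<open>0 \<le> l\<close> by simp
  finally show ?thesis by (simp add: v_def mult_left_mono)
qed simp

section \<open>Moment generating function of a single letter\<close>

lemma entropy_ln_nonneg:
  fixes p :: "'y::finite \<Rightarrow> real"
  assumes "\<And>y. 0 \<le> p y" "sum p UNIV = 1"
  shows "0 \<le> - (\<Sum>y\<in>UNIV. p y * ln (p y))"
proof -
  have "p y \<le> 1" for y using member_le_sum[of y UNIV p] assms by simp
  then have "p y * ln (p y) \<le> 0" for y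
    using assms(1)[of y] by (cases "p y = 0") (simp_all add: mult_nonneg_nonpos)
  then show ?thesis by (simp add: sum_nonpos)
qed

lemma entropy_ln_le_ln_card:
  fixes p :: "'y::finite \<Rightarrow> real"
  assumes "\<And>y. 0 \<le> p y" "sum p UNIV = 1"
  shows "- (\<Sum>y\<in>UNIV. p y * ln (p y)) \<le> ln CARD('y)"
proof -
  define N where "N = real CARD('y)"
  have "N > 0" by (simp add: N_def)
  have gibbs: "p y * (- ln (p y) - ln N) \<le> 1 / N - p y" for y
  proof (cases "p y = 0")
    case False
    then have "p y > 0" using assms(1)[of y] by simp
    then have "- ln (p y) - ln N = ln (1 / (p y * N))" using \<open>N > 0\<close> by (simp add: ln_div ln_mult)
    also have "\<dots> \<le> 1 / (p y * N) - 1" using \<open>p y > 0\<close> \<open>N > 0\<close> by (intro ln_le_minus_one) simp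
    finally show ?thesis using \<open>p y > 0\<close> \<open>N > 0\<close> by (simp add: mult_left_mono field_simps)
  qed (use \<open>N > 0\<close> in simp)
  have "- (\<Sum>y\<in>UNIV. p y * ln (p y)) - ln N = (\<Sum>y\<in>UNIV. p y * (- ln (p y) - ln N))"
    using assms(2) by (simp add: right_diff_distrib sum_subtractf sum_negf flip: sum_distrib_right)
  also have "\<dots> \<le> (\<Sum>y\<in>UNIV. 1 / N - p y)" by (intro sum_mono gibbs)
  also have "\<dots> = 0" using assms(2) \<open>N > 0\<close> by (simp add: sum_subtractf N_def)
  finally show ?thesis by (simp add: N_def)
qed

lemma sum_mult_exp_centered_ln_le:
  fixes p :: "'y::finite \<Rightarrow> real" and s \<Lambda> :: real
  assumes p0: "\<And>y. 0 \<le> p y" and p1: "sum p UNIV = 1"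
    and \<Lambda>: "1 \<le> \<Lambda>" "ln CARD('y) \<le> \<Lambda>" and s: "\<bar>s\<bar> * \<Lambda> \<le> 1/18"
  shows "(\<Sum>y\<in>UNIV. p y * exp (s * (ln (p y) - (\<Sum>z\<in>UNIV. p z * ln (p z)))))
    \<le> 1 + 9 * s^2 * \<Lambda>^2"
proof -
  define h where "h = - (\<Sum>z\<in>UNIV. p z * ln (p z))"
  define N where "N = real CARD('y)"
  have h: "0 \<le> h" "h \<le> \<Lambda>"
    using entropy_ln_nonneg[OF p0 p1] entropy_ln_le_ln_card[OF p0 p1] \<Lambda>(2) by (simp_all add: h_def)
  have "p y \<le> 1" for y using member_le_sum[of y UNIV p] p0 p1 by simp
  then have "(\<Sum>y\<in>UNIV. p y * exp (s * (ln (p y) + h)))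
      \<le> (\<Sum>y\<in>UNIV. p y + p y * (s * (ln (p y) + h)) + s^2 / 2 * (90/7 * \<Lambda>^2 * p y + 4 * exp (- \<Lambda>)))"
    using p0 h \<Lambda>(1) s by (intro sum_mono mult_exp_centered_ln_le) auto
  also have "\<dots> = 1 + (\<Sum>y\<in>UNIV. p y * (s * (ln (p y) + h)))
      + s^2 / 2 * (90/7 * \<Lambda>^2 + 4 * (N * exp (- \<Lambda>)))"
    using p1 by (simp add: N_def sum.distrib flip: sum_distrib_left sum_distrib_right sum_divide_distrib)
  also have "(\<Sum>y\<in>UNIV. p y * (s * (ln (p y) + h))) = s * ((\<Sum>y\<in>UNIV. p y * ln (p y)) + h * sum p UNIV)"
    by (simp add: algebra_simps sum.distrib sum_distrib_left)
  also have "\<dots> = 0" using p1 by (simp add: h_def)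
  also have "1 + 0 + s^2 / 2 * (90/7 * \<Lambda>^2 + 4 * (N * exp (- \<Lambda>))) \<le> 1 + 9 * s^2 * \<Lambda>^2"
  proof -
    have "N \<le> exp \<Lambda>" using exp_le_cancel_iff[of "ln N" \<Lambda>] \<Lambda>(2) by (simp add: N_def)
    then have "N * exp (- \<Lambda>) \<le> 1" by (simp add: exp_minus field_simps)
    also have "1 \<le> \<Lambda>^2" using \<Lambda>(1) by (simp add: one_le_power)
    finally have bound: "90/7 * \<Lambda>^2 + 4 * (N * exp (- \<Lambda>)) \<le> 18 * \<Lambda>^2"
      using zero_le_power2[of \<Lambda>] by linarith
    show ?thesis using mult_left_mono[OF bound, of "s^2 / 2"] by (simp add: mult.commute)
  qed
  finally show ?thesis by (simp add: h_def)
qed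

lemma shannon_H_eq_entropy_ln:
  "shannon_H S p = - (\<Sum>y\<in>S. p y * ln (p y)) / ln 2"
  unfolding shannon_H_def log_def by (simp add: sum_divide_distrib) (rule sum.cong; simp)

lemma sum_mult_powr_information_le:
  fixes p :: "'y::finite \<Rightarrow> real" and r :: real
  assumes p0: "\<And>y. 0 \<le> p y" and p1: "sum p UNIV = 1"
    and r: "\<bar>r\<bar> * log 2 (max CARD('y) 3) \<le> 1/18"
  shows "(\<Sum>y\<in>UNIV. p y * 2 powr (r * (log 2 (p y) + shannon_H UNIV p)))
    \<le> 2 powr (9 * r^2 * (log 2 (max CARD('y) 3))^2)"
proof -
  define L where "L = log 2 (max CARD('y) 3)"
  define \<Lambda> where "\<Lambda> = ln (max CARD('y) 3)"
  have \<Lambda>L: "\<Lambda> = L * ln 2" by (simp add: L_def \<Lambda>_def log_def)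
  have "0 \<le> L" by (simp add: L_def)
  have "ln 3 \<le> \<Lambda>" by (simp add: \<Lambda>_def)
  then have "1 \<le> \<Lambda>" using ln3_gt_1 by linarith
  moreover have "ln CARD('y) \<le> \<Lambda>" by (simp add: \<Lambda>_def)
  moreover have "\<Lambda> \<le> L" using \<open>0 \<le> L\<close> ln_2_less_1 by (simp add: \<Lambda>L mult_left_le)
  then have "\<bar>r\<bar> * \<Lambda> \<le> \<bar>r\<bar> * L" by (simp add: mult_left_mono)
  then have "\<bar>r\<bar> * \<Lambda> \<le> 1/18" using r by (simp add: L_def)
  ultimately have "(\<Sum>y\<in>UNIV. p y * exp (r * (ln (p y) - (\<Sum>z\<in>UNIV. p z * ln (p z)))))
      \<le> 1 + 9 * r^2 * \<Lambda>^2"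
    by (intro sum_mult_exp_centered_ln_le p0 p1)
  also have "\<dots> \<le> exp (9 * r^2 * \<Lambda>^2)" by (rule exp_ge_add_one_self)
  also have "\<dots> \<le> exp (9 * r^2 * L^2 * ln 2)"
  proof -
    have "\<Lambda>^2 = L^2 * ln 2 * ln 2" by (simp add: \<Lambda>L power2_eq_square)
    also have "\<dots> \<le> L^2 * ln 2" using ln_2_less_1 by (simp add: mult_left_le)
    finally show ?thesis by (simp add: mult_left_mono)
  qed
  also have "\<dots> = 2 powr (9 * r^2 * L^2)" by (simp add: powr_def)
  also have "(\<Sum>y\<in>UNIV. p y * exp (r * (ln (p y) - (\<Sum>z\<in>UNIV. p z * ln (p z)))))
      = (\<Sum>y\<in>UNIV. p y * 2 powr (r * (log 2 (p y) + shannon_H UNIV p)))"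
  proof -
    have "(log 2 (p y) + shannon_H UNIV p) * ln 2 = ln (p y) - (\<Sum>z\<in>UNIV. p z * ln (p z))" for y
      by (simp add: shannon_H_eq_entropy_ln log_def field_simps)
    then show ?thesis by (simp add: powr_def mult.assoc)
  qed
  finally show ?thesis by (simp add: L_def)
qed

section \<open>Product channels\<close>

lemma finite_blocks: "finite (blocks n :: 'y::finite list set)"
  using finite_lists_length_eq[of "UNIV :: 'y set" n] by (simp add: blocks_def)

lemma blocks_Suc: "blocks (Suc n) = (\<lambda>(y, ys). y # ys) ` (UNIV \<times> blocks n)"
proof (intro equalityI subsetI)
  fix zs assume "zs \<in> blocks (Suc n)"
  then obtain y ys where "zs = y # ys" "length ys = n" unfolding blocks_def by (cases zs) auto
  then show "zs \<in> (\<lambda>(y, ys). y # ys) ` (UNIV \<times> blocks n)" unfolding blocks_def by force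
qed (auto simp: blocks_def)

lemma sum_blocks_prod:
  fixes f :: "nat \<Rightarrow> 'y::finite \<Rightarrow> 'a::comm_semiring_1"
  shows "(\<Sum>ys\<in>blocks n. \<Prod>i<n. f i (ys ! i)) = (\<Prod>i<n. \<Sum>y\<in>UNIV. f i y)"
proof (induction n arbitrary: f)
  case 0
  have "blocks 0 = {[] :: 'y list}" unfolding blocks_def by auto
  then show ?case by simp
next
  case (Suc n)
  have inj: "inj_on (\<lambda>(y, ys). y # ys) (UNIV \<times> blocks n :: ('y \<times> 'y list) set)"
    by (auto simp: inj_on_def)
  have "(\<Sum>ys\<in>blocks (Suc n). \<Prod>i<Suc n. f i (ys ! i))
      = (\<Sum>(y, ys)\<in>UNIV \<times> blocks n. f 0 y * (\<Prod>i<n. f (Suc i) (ys ! i)))"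
    unfolding blocks_Suc sum.reindex[OF inj]
    by (intro sum.cong refl) (simp only: comp_def split_beta prod.lessThan_Suc_shift nth_Cons_0 nth_Cons_Suc)
  also have "\<dots> = (\<Sum>y\<in>UNIV. f 0 y * (\<Sum>ys\<in>blocks n. \<Prod>i<n. f (Suc i) (ys ! i)))"
    by (simp add: sum.cartesian_product[symmetric] sum_distrib_left)
  also have "\<dots> = (\<Sum>y\<in>UNIV. f 0 y) * (\<Prod>i<n. \<Sum>y\<in>UNIV. f (Suc i) y)"
    by (simp add: Suc.IH[of "\<lambda>i. f (Suc i)"] sum_distrib_right)
  also have "\<dots> = (\<Prod>i<Suc n. \<Sum>y\<in>UNIV. f i y)"
    by (simp only: prod.lessThan_Suc_shift)
  finally show ?case .
qed

lemma sum_blocks_prod_mult_nth: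
  fixes f :: "nat \<Rightarrow> 'y::finite \<Rightarrow> 'a::comm_semiring_1"
  assumes "i < n" and "\<And>j. (\<Sum>y\<in>UNIV. f j y) = 1"
  shows "(\<Sum>ys\<in>blocks n. (\<Prod>j<n. f j (ys ! j)) * g (ys ! i)) = (\<Sum>y\<in>UNIV. f i y * g y)"
proof -
  define h where "h = (\<lambda>j y. if j = i then f j y * g y else f j y)"
  have "(\<Prod>j<n. h j (ys ! j)) = (\<Prod>j<n. f j (ys ! j)) * g (ys ! i)" for ys
  proof -
    have "(\<Prod>j<n. h j (ys ! j)) = h i (ys ! i) * (\<Prod>j\<in>{..<n} - {i}. h j (ys ! j))"
      using assms(1) by (simp add: prod.remove)
    also have "(\<Prod>j\<in>{..<n} - {i}. h j (ys ! j)) = (\<Prod>j\<in>{..<n} - {i}. f j (ys ! j))"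
      by (intro prod.cong) (auto simp: h_def)
    also have "h i (ys ! i) * \<dots> = (\<Prod>j<n. f j (ys ! j)) * g (ys ! i)"
      using assms(1) by (simp add: h_def prod.remove mult_ac)
    finally show ?thesis .
  qed
  then have "(\<Sum>ys\<in>blocks n. (\<Prod>j<n. f j (ys ! j)) * g (ys ! i)) = (\<Prod>j<n. \<Sum>y\<in>UNIV. h j y)"
    by (simp flip: sum_blocks_prod)
  also have "\<dots> = (\<Sum>y\<in>UNIV. h i y) * (\<Prod>j\<in>{..<n} - {i}. \<Sum>y\<in>UNIV. h j y)"
    using assms(1) by (subst prod.remove[of _ i]) auto
  also have "(\<Prod>j\<in>{..<n} - {i}. \<Sum>y\<in>UNIV. h j y) = 1"
    using assms(2) by (intro prod.neutral) (simp add: h_def)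
  finally show ?thesis by (simp add: h_def)
qed

lemma prod_mult_powr_log_sum:
  fixes f c :: "'i \<Rightarrow> real"
  assumes "finite I"
  shows "prod f I * 2 powr (r * (log 2 (prod f I) + sum c I))
    = (\<Prod>i\<in>I. f i * 2 powr (r * (log 2 (f i) + c i)))"
proof (cases "\<exists>i\<in>I. f i = 0")
  case True
  then have "prod f I = 0" "(\<Prod>i\<in>I. f i * 2 powr (r * (log 2 (f i) + c i))) = 0"
    using assms by (auto intro: prod_zero)
  then show ?thesis by simp
next
  case False
  then have "log 2 (prod f I) = (\<Sum>i\<in>I. log 2 (f i))"
    using assms by (simp add: log_def ln_prod sum_divide_distrib)
  then have "2 powr (r * (log 2 (prod f I) + sum c I)) = (\<Prod>i\<in>I. 2 powr (r * (log 2 (f i) + c i)))"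
    by (simp add: sum_distrib_left sum.distrib distrib_left flip: powr_sum)
  then show ?thesis by (simp add: prod.distrib)
qed

lemma prod_chan_nonneg: "0 \<le> prod_chan W xs ys"
  unfolding prod_chan_def by (simp add: prod_nonneg)

lemma sum_prod_chan_blocks:
  fixes W :: "'x \<Rightarrow> 'y::finite pmf"
  shows "(\<Sum>ys\<in>blocks (length xs). prod_chan W xs ys) = 1"
  using sum_blocks_prod[of "\<lambda>i. pmf (W (xs ! i))" "length xs"]
  by (simp add: prod_chan_def sum_pmf_eq_1)

lemma H_chan_eq_sum_shannon_H:
  fixes W :: "'x \<Rightarrow> 'y::finite pmf"
  shows "H_chan W xs = (\<Sum>i<length xs. shannon_H UNIV (pmf (W (xs ! i))))"
proof -
  define n where "n = length xs"
  define p where "p i = pmf (W (xs ! i))" for i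
  have P: "prod_chan W xs ys = (\<Prod>i<n. p i (ys ! i))" for ys
    by (simp add: prod_chan_def n_def p_def)
  have "prod_chan W xs ys * ln (prod_chan W xs ys)
      = (\<Sum>i<n. (\<Prod>j<n. p j (ys ! j)) * ln (p i (ys ! i)))" for ys
  proof (cases "\<exists>i<n. p i (ys ! i) = 0")
    case True
    then have z: "(\<Prod>j<n. p j (ys ! j)) = 0" by (auto intro: prod_zero)
    show ?thesis unfolding P z by simp
  next
    case False
    then have "ln (\<Prod>j<n. p j (ys ! j)) = (\<Sum>i<n. ln (p i (ys ! i)))" by (intro ln_prod) auto
    then show ?thesis unfolding P by (simp add: sum_distrib_left)
  qed
  then have "H_chan W xs = - (\<Sum>i<n. \<Sum>ys\<in>blocks n. (\<Prod>j<n. p j (ys ! j)) * ln (p i (ys ! i))) / ln 2"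
    by (simp add: H_chan_def shannon_H_eq_entropy_ln flip: n_def) (subst sum.swap, simp)
  also have "\<dots> = - (\<Sum>i<n. \<Sum>y\<in>UNIV. p i y * ln (p i y)) / ln 2"
    by (intro arg_cong[where f = "\<lambda>x. - x / ln 2"] sum.cong refl sum_blocks_prod_mult_nth)
      (simp_all add: p_def sum_pmf_eq_1)
  also have "\<dots> = (\<Sum>i<n. shannon_H UNIV (p i))"
    by (simp add: shannon_H_eq_entropy_ln sum_divide_distrib sum_negf)
  finally show ?thesis by (simp add: n_def p_def)
qed

lemma sum_prod_chan_mult_powr_information_le:
  fixes W :: "'x \<Rightarrow> 'y::finite pmf"
  assumes "\<bar>r\<bar> * log 2 (max CARD('y) 3) \<le> 1/18"
  shows "(\<Sum>ys\<in>blocks (length xs).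
      prod_chan W xs ys * 2 powr (r * (log 2 (prod_chan W xs ys) + H_chan W xs)))
    \<le> 2 powr (9 * real (length xs) * r^2 * (log 2 (max CARD('y) 3))^2)"
proof -
  define n where "n = length xs"
  define p where "p i = pmf (W (xs ! i))" for i
  define a where "a = 9 * r^2 * (log 2 (max CARD('y) 3))^2"
  have "(\<Sum>ys\<in>blocks n. prod_chan W xs ys * 2 powr (r * (log 2 (prod_chan W xs ys) + H_chan W xs)))
      = (\<Sum>ys\<in>blocks n. \<Prod>i<n. p i (ys ! i) * 2 powr (r * (log 2 (p i (ys ! i)) + shannon_H UNIV (p i))))"
    by (simp add: prod_chan_def H_chan_eq_sum_shannon_H prod_mult_powr_log_sum n_def p_def)
  also have "\<dots> = (\<Prod>i<n. \<Sum>y\<in>UNIV. p i y * 2 powr (r * (log 2 (p i y) + shannon_H UNIV (p i))))"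
    by (rule sum_blocks_prod)
  also have "\<dots> \<le> (\<Prod>i<n. 2 powr a)"
    using sum_mult_powr_information_le[OF _ _ assms]
    by (intro prod_mono) (simp add: a_def p_def sum_pmf_eq_1 sum_nonneg)
  also have "\<dots> = 2 powr (real n * a)" by (simp add: powr_realpow[symmetric] powr_powr mult.commute)
  finally show ?thesis by (simp add: n_def a_def mult_ac)
qed

section \<open>Two-sided Chernoff bound\<close>

lemma sum_abs_gt_le_two_sided_powr:
  fixes P X :: "'a \<Rightarrow> real"
  assumes "finite A" "\<And>a. a \<in> A \<Longrightarrow> 0 \<le> P a" "0 \<le> s"
  shows "(\<Sum>a\<in>{a\<in>A. t < \<bar>X a\<bar>}. P a)
    \<le> 2 powr (- s * t) * ((\<Sum>a\<in>A. P a * 2 powr (s * X a)) + (\<Sum>a\<in>A. P a * 2 powr (- s * X a)))"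
proof -
  have tail: "P a \<le> P a * 2 powr (s * X a - s * t) + P a * 2 powr (- s * X a - s * t)"
    if "a \<in> A" "t < \<bar>X a\<bar>" for a
  proof -
    have "t \<le> X a \<or> t \<le> - X a" using that(2) by linarith
    then have "s * t \<le> s * X a \<or> s * t \<le> s * - X a"
      using mult_left_mono[OF _ assms(3)] by blast
    then have "1 \<le> 2 powr (s * X a - s * t) \<or> 1 \<le> 2 powr (- s * X a - s * t)"
      by (auto intro: ge_one_powr_ge_zero)
    then have one: "1 \<le> 2 powr (s * X a - s * t) + 2 powr (- s * X a - s * t)"
      by (auto intro: add_increasing add_increasing2)
    show ?thesis using mult_left_mono[OF one assms(2)[OF that(1)]] by (simp add: distrib_left)
  qed
  have "(\<Sum>a\<in>{a\<in>A. t < \<bar>X a\<bar>}. P a)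
      \<le> (\<Sum>a\<in>{a\<in>A. t < \<bar>X a\<bar>}. P a * 2 powr (s * X a - s * t) + P a * 2 powr (- s * X a - s * t))"
    using tail by (intro sum_mono) auto
  also have "\<dots> \<le> (\<Sum>a\<in>A. P a * 2 powr (s * X a - s * t) + P a * 2 powr (- s * X a - s * t))"
    using assms(1,2) by (intro sum_mono2) auto
  also have "\<dots> = (\<Sum>a\<in>A. 2 powr (- s * t) * (P a * 2 powr (s * X a))
      + 2 powr (- s * t) * (P a * 2 powr (- s * X a)))"
  proof -
    have "2 powr (c - s * t) = 2 powr (- s * t) * 2 powr c" for c
      by (simp add: powr_diff powr_minus_divide)
    then show ?thesis by (simp only: mult.left_commute)
  qed
  also have "\<dots> = 2 powr (- s * t) * ((\<Sum>a\<in>A. P a * 2 powr (s * X a)) + (\<Sum>a\<in>A. P a * 2 powr (- s * X a)))"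
    by (simp only: sum.distrib distrib_left sum_distrib_left)
  finally show ?thesis .
qed

lemma prod_chan_information_deviation_le:
  fixes W :: "'x \<Rightarrow> 'y::finite pmf"
  assumes "0 \<le> s" "s * log 2 (max CARD('y) 3) \<le> 1/18"
  shows "(\<Sum>ys\<in>{ys \<in> blocks (length xs). t < \<bar>log 2 (prod_chan W xs ys) + H_chan W xs\<bar>}.
      prod_chan W xs ys)
    \<le> 2 * 2 powr (- s * t + 9 * real (length xs) * s^2 * (log 2 (max CARD('y) 3))^2)"
proof -
  define M where "M r = (\<Sum>ys\<in>blocks (length xs).
    prod_chan W xs ys * 2 powr (r * (log 2 (prod_chan W xs ys) + H_chan W xs)))" for r
  define a where "a = 9 * real (length xs) * s^2 * (log 2 (max CARD('y) 3))^2"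
  have "(\<Sum>ys\<in>{ys \<in> blocks (length xs). t < \<bar>log 2 (prod_chan W xs ys) + H_chan W xs\<bar>}.
      prod_chan W xs ys) \<le> 2 powr (- s * t) * (M s + M (- s))"
    unfolding M_def using assms(1) finite_blocks prod_chan_nonneg
    by (intro sum_abs_gt_le_two_sided_powr) auto
  also have "\<dots> \<le> 2 powr (- s * t) * (2 powr a + 2 powr a)"
    using sum_prod_chan_mult_powr_information_le[of s W xs]
      sum_prod_chan_mult_powr_information_le[of "- s" W xs] assms
    by (intro mult_left_mono add_mono) (simp_all add: M_def a_def)
  also have "\<dots> = 2 * 2 powr (- s * t + a)" unfolding powr_add by simp
  finally show ?thesis by (simp add: a_def)
qed

lemma one_minus_sum_typical_set_le:
  fixes W :: "'x \<Rightarrow> 'y::finite pmf"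
  shows "1 - (\<Sum>ys\<in>typical_set W xs \<delta>. prod_chan W xs ys)
    \<le> (\<Sum>ys\<in>{ys \<in> blocks (length xs).
          \<delta> * sqrt (length xs) < \<bar>log 2 (prod_chan W xs ys) + H_chan W xs\<bar>}. prod_chan W xs ys)"
    (is "_ \<le> sum _ ?D")
proof -
  define B where "B = (blocks (length xs) :: 'y list set)"
  define T where "T = typical_set W xs \<delta>"
  have "finite B" "T \<subseteq> B" by (auto simp: B_def T_def typical_set_def finite_blocks)
  have zero: "prod_chan W xs ys = 0" if "ys \<in> B - T" "ys \<notin> ?D" for ys
    using that prod_chan_nonneg[of W xs ys] by (auto simp: B_def T_def typical_set_def)
  have "1 - (\<Sum>ys\<in>T. prod_chan W xs ys) = (\<Sum>ys\<in>B - T. prod_chan W xs ys)"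
    using sum_prod_chan_blocks[of W xs] \<open>finite B\<close> \<open>T \<subseteq> B\<close> by (simp add: B_def sum_diff)
  also have "\<dots> = (\<Sum>ys\<in>(B - T) \<inter> ?D. prod_chan W xs ys)"
    using \<open>finite B\<close> zero by (intro sum.mono_neutral_right) auto
  also have "\<dots> \<le> sum (prod_chan W xs) ?D"
    using \<open>finite B\<close> prod_chan_nonneg by (intro sum_mono2) (auto simp: B_def)
  finally show ?thesis by (simp add: T_def)
qed

theorem lemma1:
  fixes W :: "'x \<Rightarrow> ('y::finite) pmf" and xs :: "'x list" and n :: nat and \<delta> :: real
  assumes "length xs = n"
    and "0 < \<delta>"
    and "\<delta> \<le> sqrt (real n) * log 2 (real CARD('y))"
  shows "(\<Sum>ys\<in>typical_set W xs \<delta>. prod_chan W xs ys)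
           \<ge> 1 - 2 * 2 powr (- (\<delta>^2) / (36 * Kfun CARD('y)))"
proof -
  define L where "L = log 2 (real (max CARD('y) 3))"
  define s where "s = \<delta> / (18 * L^2 * sqrt n)"
    \<comment> \<open>the minimiser of the Chernoff exponent \<open>- s \<delta> sqrt n + 9 n s\<^sup>2 L\<^sup>2\<close>\<close>
  have "0 < L" by (simp add: L_def)
  have "log 2 CARD('y) \<le> L" by (simp add: L_def)
  have "0 < sqrt n" using assms(2,3) by (cases "n = 0") auto
  have "0 \<le> s" using assms(2) by (simp add: s_def)
  have "s * L = \<delta> / (18 * L * sqrt n)" using \<open>0 < L\<close> by (simp add: s_def power2_eq_square)
  also have "\<dots> \<le> sqrt n * L / (18 * L * sqrt n)"
    using assms(3) \<open>log 2 CARD('y) \<le> L\<close> \<open>0 < L\<close> \<open>0 < sqrt n\<close>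
    by (intro divide_right_mono) (auto intro: order.trans mult_left_mono)
  finally have "s * L \<le> 1/18" using \<open>0 < L\<close> \<open>0 < sqrt n\<close> by simp
  have "- s * (\<delta> * sqrt n) + 9 * (sqrt n)^2 * s^2 * L^2 = - (\<delta>^2) / (36 * L^2)"
    using \<open>0 < L\<close> \<open>0 < sqrt n\<close> by (simp add: s_def field_simps power2_eq_square)
  then have "- s * (\<delta> * sqrt n) + 9 * n * s^2 * L^2 = - (\<delta>^2) / (36 * L^2)" by simp
  then show ?thesis
    using one_minus_sum_typical_set_le[of W xs \<delta>]
      prod_chan_information_deviation_le[OF \<open>0 \<le> s\<close>, of W xs "\<delta> * sqrt n"] \<open>s * L \<le> 1/18\<close>
    by (simp add: Kfun_def L_def assms(1))
qed

end
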